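(* Let $\mathcal N$ be a network (with a general collision profile) of character $D^*$. For every integer $T\ge\max(2D^*,1)$, $\mathcal R^{(\mathcal M_T,\mathcal E_T)}\subseteq\mathcal R^{\mathcal N}$ (and hence $\mathcal R^{\mathcal N}=\mathcal R^{(\mathcal M_T,\mathcal E_T)}$).
   Context: A network is a triple $\mathcal N=(\mathcal L,\mathcal I,D_{\mathcal L})$ where $\mathcal L$ is a finite nonempty set of links, each $\mathcal I(l)$ is a collection of nonempty subsets of $\mathcal L$, and $D_{\mathcal L}$ assigns an integer $D_{\mathcal L}(l,l')$ to every pair with $l'\in\phi$ for some $\phi\in\mathcal I(l)$. The character is $D^*=\max_{l}\max_{\phi\in\mathcal I(l)}\max_{l'\in\phi}|D_{\mathcal L}(l,l')|$ (0 if there are no collision sets). A schedule is a map $S:\mathcal L\times\mathbb Z\to\{0,1\}$; $S(l,t)$ has a collision if there is $\phi\in\mathcal I(l)$ with $S(l',t+D_{\mathcal L}(l,l'))=1$ for all $l'\in\phi$; $S$ is collision free if no $(l,t)$ with $S(l,t)=1$ has a collision. $R_S(l)=\lim_{T\to\infty}\frac1T\sum_{t=0}^{T-1}\iota\big(S(l,t)=1\text{ and collision free}\big)$ when it exists; $R_S=(R_S(l))_l$. A nonnegative vector $R\in[0,\infty)^{\mathcal L}$ is achievable if for every $\epsilon>0$ some schedule $S$ has a rate vector with $R_S(l)\ge R(l)-\epsilon$ for all $l$; $\mathcal R^{\mathcal N}$ is the set of achievable nonnegative vectors. $S[T,k]$ is the $|\mathcal L|\times T$ binary matrix with $S[T,k](l,j)=S(l,kT+j)$.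 The scheduling graph $(\mathcal M_T,\mathcal E_T)$ has vertex set $\mathcal M_T$ = all $|\mathcal L|\times T$ binary matrices $A$ with $A=S[T,0]$ for some collision-free schedule $S$, and edge set $\mathcal E_T$ = all pairs $(A,B)$ with $A=S[T,0]$, $B=S[T,1]$ for some collision-free $S$. A cycle is a sequence $(A_0,\dots,A_k)$, $k\ge1$, with $(A_i,A_{i+1})\in\mathcal E_T$, $A_k=A_0$, and $A_0,\dots,A_{k-1}$ pairwise distinct; its rate vector is $R_C=\frac{1}{kT}\sum_{i=0}^{k-1}A_i\mathbf 1$. $\mathcal R^{(\mathcal M_T,\mathcal E_T)}$ is the convex hull of the rate vectors of all cycles. *)

theory Defs
  imports "HOL-Analysis.Analysis"
begin

(* A network over a finite nonempty type 'l of links: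
   I :: 'l \<Rightarrow> 'l set set   collision sets of each link,
   D :: 'l \<Rightarrow> 'l \<Rightarrow> int      delays (only relevant when l' \<in> \<phi> \<in> I l).
   A schedule is S :: 'l \<Rightarrow> int \<Rightarrow> bool  (True = 1). *)

definition network :: "('l::finite \<Rightarrow> 'l set set) \<Rightarrow> bool" where
  "network I \<longleftrightarrow> (\<forall>l. \<forall>\<phi>\<in>I l. \<phi> \<noteq> {})"

definition character :: "('l::finite \<Rightarrow> 'l set set) \<Rightarrow> ('l \<Rightarrow> 'l \<Rightarrow> int) \<Rightarrow> int" where
  "character I D = Max ({\<bar>D l l'\<bar> | l \<phi> l'. \<phi> \<in> I l \<and> l' \<in> \<phi>} \<union> {0})"

definition has_collision ::
  "('l \<Rightarrow> 'l set set) \<Rightarrow> ('l \<Rightarrow> 'l \<Rightarrow> int) \<Rightarrow> ('l \<Rightarrow> int \<Rightarrow> bool) \<Rightarrow> 'l \<Rightarrow> int \<Rightarrow> bool" where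
  "has_collision I D S l t \<longleftrightarrow> (\<exists>\<phi>\<in>I l. \<forall>l'\<in>\<phi>. S l' (t + D l l'))"

definition collision_free ::
  "('l \<Rightarrow> 'l set set) \<Rightarrow> ('l \<Rightarrow> 'l \<Rightarrow> int) \<Rightarrow> ('l \<Rightarrow> int \<Rightarrow> bool) \<Rightarrow> bool" where
  "collision_free I D S \<longleftrightarrow> (\<forall>l t. S l t \<longrightarrow> \<not> has_collision I D S l t)"

definition has_rate ::
  "('l \<Rightarrow> 'l set set) \<Rightarrow> ('l \<Rightarrow> 'l \<Rightarrow> int) \<Rightarrow> ('l \<Rightarrow> int \<Rightarrow> bool) \<Rightarrow> 'l \<Rightarrow> real \<Rightarrow> bool" where
  "has_rate I D S l r \<longleftrightarrow>
     ((\<lambda>T::nat. (1 / real T) *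
        (\<Sum>t<T. of_bool (S l (int t) \<and> \<not> has_collision I D S l (int t))))
      \<longlonglongrightarrow> r)"

definition achievable_region ::
  "('l::finite \<Rightarrow> 'l set set) \<Rightarrow> ('l \<Rightarrow> 'l \<Rightarrow> int) \<Rightarrow> (real ^ 'l) set" where
  "achievable_region I D =
     {R. (\<forall>l. R $ l \<ge> 0) \<and>
         (\<forall>\<epsilon>>0. \<exists>S RS. (\<forall>l. has_rate I D S l (RS l)) \<and> (\<forall>l. RS l \<ge> R $ l - \<epsilon>))}"

(* S[T,k] as an |L| x T binary matrix: entries at columns j \<ge> T are fixed to False *)
definition block :: "('l \<Rightarrow> int \<Rightarrow> bool) \<Rightarrow> nat \<Rightarrow> int \<Rightarrow> ('l \<Rightarrow> nat \<Rightarrow> bool)" where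
  "block S T k = (\<lambda>l j. if j < T then S l (k * int T + int j) else False)"

definition sched_vertices ::
  "('l \<Rightarrow> 'l set set) \<Rightarrow> ('l \<Rightarrow> 'l \<Rightarrow> int) \<Rightarrow> nat \<Rightarrow> ('l \<Rightarrow> nat \<Rightarrow> bool) set" where
  "sched_vertices I D T = {A. \<exists>S. collision_free I D S \<and> A = block S T 0}"

definition sched_edges ::
  "('l \<Rightarrow> 'l set set) \<Rightarrow> ('l \<Rightarrow> 'l \<Rightarrow> int) \<Rightarrow> nat \<Rightarrow> (('l \<Rightarrow> nat \<Rightarrow> bool) \<times> ('l \<Rightarrow> nat \<Rightarrow> bool)) set" where
  "sched_edges I D T = {(A, B). \<exists>S. collision_free I D S \<and> A = block S T 0 \<and> B = block S T 1}"

(* a cycle (A_0,...,A_k) with A_k = A_0 is given by the list [A_0,...,A_{k-1}] *)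
definition is_cycle ::
  "(('m \<times> 'm) set) \<Rightarrow> 'm list \<Rightarrow> bool" where
  "is_cycle E cs \<longleftrightarrow> length cs \<ge> 1 \<and> distinct cs \<and>
     (\<forall>i < length cs. (cs ! i, cs ! ((i + 1) mod length cs)) \<in> E)"

definition cycle_rate :: "nat \<Rightarrow> ('l::finite \<Rightarrow> nat \<Rightarrow> bool) list \<Rightarrow> real ^ 'l" where
  "cycle_rate T cs = (\<chi> l. (1 / (real (length cs) * real T)) *
      (\<Sum>i<length cs. \<Sum>j<T. of_bool ((cs ! i) l j)))"

definition graph_region ::
  "('l::finite \<Rightarrow> 'l set set) \<Rightarrow> ('l \<Rightarrow> 'l \<Rightarrow> int) \<Rightarrow> nat \<Rightarrow> (real ^ 'l) set" where
  "graph_region I D T = convex hull {cycle_rate T cs | cs. is_cycle (sched_edges I D T) cs}"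

end

theory Submission
  imports Defs "HOL-Real_Asymp.Real_Asymp"
begin

(* A closed walk A_0, ..., A_(k-1) in the scheduling graph is realised by the periodic schedule
   that plays the blocks A_0, ..., A_(k-1) in turn. Since T >= 2 D*, every potential collision lies
   in a window of two consecutive blocks, where the schedule coincides with a collision-free
   schedule witnessing the edge (A_i, A_(i+1)); so the periodic schedule is collision free and its
   rate vector is the rate of the walk. The all-idle block is adjacent to every vertex in both
   directions, so two closed walks can be joined through it; repeating them in suitable proportions
   shows that the closure of the set of walk rates is convex. Hence it contains the convex hull of
   the cycle rates, and each of its points is approximated by rates of periodic schedules. *)

lemma finite_abs_delays:
  fixes I :: "'l::finite \<Rightarrow> 'l set set"
  shows "finite ({\<bar>D l l'\<bar> | l \<phi> l'. \<phi> \<in> I l \<and> l' \<in> \<phi>} \<union> {0})"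
proof -
  have "{\<bar>D l l'\<bar> | l \<phi> l'. \<phi> \<in> I l \<and> l' \<in> \<phi>} \<subseteq> range (\<lambda>(l, l'). \<bar>D l l'\<bar>)"
    by auto
  then have "finite {\<bar>D l l'\<bar> | l \<phi> l'. \<phi> \<in> I l \<and> l' \<in> \<phi>}"
    by (rule finite_subset) simp
  then show ?thesis
    by simp
qed

lemma character_nonneg:
  fixes I :: "'l::finite \<Rightarrow> 'l set set"
  shows "0 \<le> character I D"
  unfolding character_def by (rule Max_ge[OF finite_abs_delays]) simp

lemma abs_delay_le_character:
  fixes I :: "'l::finite \<Rightarrow> 'l set set"
  assumes "\<phi> \<in> I l" "l' \<in> \<phi>"
  shows "\<bar>D l l'\<bar> \<le> character I D"
  unfolding character_def using assms by (intro Max_ge[OF finite_abs_delays]) auto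

lemma has_collision_mono:
  assumes "has_collision I D S l t" "\<And>l t. S l t \<Longrightarrow> S' l t"
  shows "has_collision I D S' l t"
  using assms unfolding has_collision_def by blast

lemma collision_free_antimono:
  assumes "collision_free I D S" "\<And>l t. S' l t \<Longrightarrow> S l t"
  shows "collision_free I D S'"
  using assms has_collision_mono unfolding collision_free_def by metis

lemma collision_free_shift:
  assumes "collision_free I D S"
  shows "collision_free I D (\<lambda>l t. S l (t + c))"
  unfolding collision_free_def has_collision_def
proof (intro allI impI)
  fix l t
  assume "S l (t + c)"
  then have "\<forall>\<phi>\<in>I l. \<exists>l'\<in>\<phi>. \<not> S l' (t + c + D l l')"
    using assms unfolding collision_free_def has_collision_def by blast
  then show "\<not> (\<exists>\<phi>\<in>I l. \<forall>l'\<in>\<phi>. S l' (t + D l l' + c))"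
    by (simp add: ac_simps)
qed

lemma collision_free_if_locally:
  fixes I :: "'l::finite \<Rightarrow> 'l set set"
  assumes "\<And>t. \<exists>S'. collision_free I D S' \<and>
      (\<forall>l s. \<bar>s - t\<bar> \<le> character I D \<longrightarrow> S l s = S' l s)"
  shows "collision_free I D S"
  unfolding collision_free_def
proof (intro allI impI notI)
  fix l t assume "S l t" and "has_collision I D S l t"
  then obtain \<phi> where \<phi>: "\<phi> \<in> I l" "\<forall>l'\<in>\<phi>. S l' (t + D l l')"
    unfolding has_collision_def by blast
  obtain S' where S': "collision_free I D S'"
    and agree: "\<And>l s. \<bar>s - t\<bar> \<le> character I D \<Longrightarrow> S l s = S' l s"
    using assms by blast
  have "S' l t"
    using \<open>S l t\<close> agree[of t] character_nonneg[of I D] by simp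
  moreover have "has_collision I D S' l t"
    unfolding has_collision_def
    using \<phi> agree abs_delay_le_character[of \<phi> I l _ D] by force
  ultimately show False
    using S' unfolding collision_free_def by blast
qed

definition idle_block :: "'l \<Rightarrow> nat \<Rightarrow> bool" where
  "idle_block = (\<lambda>l j. False)"

lemma sched_edge_to_idle:
  assumes "(A, B) \<in> sched_edges I D T"
  shows "(A, idle_block) \<in> sched_edges I D T"
proof -
  obtain S where S: "collision_free I D S" "A = block S T 0"
    using assms unfolding sched_edges_def by auto
  let ?S' = "\<lambda>l t. S l t \<and> t < int T"
  have "collision_free I D ?S'"
    using S(1) by (rule collision_free_antimono) simp
  moreover have "A = block ?S' T 0" "idle_block = block ?S' T 1"
    unfolding S(2) block_def idle_block_def by auto
  ultimately show ?thesis
    unfolding sched_edges_def by blast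
qed

lemma sched_edge_from_idle:
  assumes "(A, B) \<in> sched_edges I D T"
  shows "(idle_block, A) \<in> sched_edges I D T"
proof -
  obtain S where S: "collision_free I D S" "A = block S T 0"
    using assms unfolding sched_edges_def by auto
  let ?S' = "\<lambda>l t. S l (t + - int T) \<and> int T \<le> t"
  have "collision_free I D ?S'"
    using collision_free_shift[OF S(1), of "- int T"] by (rule collision_free_antimono) simp
  moreover have "idle_block = block ?S' T 0" "A = block ?S' T 1"
    unfolding S(2) block_def idle_block_def by auto
  ultimately show ?thesis
    unfolding sched_edges_def by blast
qed

definition closed_walk :: "('m \<times> 'm) set \<Rightarrow> 'm list \<Rightarrow> bool" where
  "closed_walk E ws \<longleftrightarrow> ws \<noteq> [] \<and> (\<forall>i < length ws. (ws ! i, ws ! ((i + 1) mod length ws)) \<in> E)"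

lemma closed_walk_iff_successively:
  "closed_walk E ws \<longleftrightarrow>
     ws \<noteq> [] \<and> successively (\<lambda>a b. (a, b) \<in> E) ws \<and> (last ws, hd ws) \<in> E"
proof (cases ws rule: rev_cases)
  case (snoc vs v)
  let ?n = "length vs"
  have "(\<forall>i < Suc ?n. (ws ! i, ws ! ((i + 1) mod Suc ?n)) \<in> E) \<longleftrightarrow>
      (\<forall>i < ?n. (ws ! i, ws ! Suc i) \<in> E) \<and> (ws ! ?n, ws ! 0) \<in> E"
    unfolding less_Suc_eq by auto
  moreover have "last ws = ws ! ?n" "hd ws = ws ! 0"
    using snoc by (simp_all add: hd_conv_nth)
  ultimately show ?thesis
    unfolding closed_walk_def successively_conv_nth using snoc by simp
qed (simp add: closed_walk_def)

lemma closed_walk_append: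
  assumes "closed_walk E xs" "closed_walk E ys" "(last xs, hd ys) \<in> E" "(last ys, hd xs) \<in> E"
  shows "closed_walk E (xs @ ys)"
  using assms unfolding closed_walk_iff_successively by (simp add: successively_append_iff)

lemma closed_walk_replicate:
  assumes "closed_walk E ws" "p > 0"
  shows "closed_walk E (concat (replicate p ws))"
proof -
  have ends: "ws \<noteq> []" "(last ws, hd ws) \<in> E"
    using assms(1) unfolding closed_walk_iff_successively by auto
  have "closed_walk E (concat (replicate (Suc q) ws))" for q
  proof (induction q)
    case (Suc q)
    have "concat (replicate (Suc q) ws) = concat (replicate q ws) @ ws"
      by (induction q) auto
    then have "last (concat (replicate (Suc q) ws)) = last ws"
      using ends by simp
    moreover have "hd (concat (replicate (Suc q) ws)) = hd ws"
      using ends by simp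
    ultimately show ?case
      using closed_walk_append[OF assms(1) Suc] ends by simp
  qed (use assms(1) in simp)
  then show ?thesis
    using assms(2) gr0_implies_Suc by blast
qed

lemma closed_walk_edge_source:
  assumes "closed_walk E ws" "A \<in> set ws"
  shows "\<exists>B. (A, B) \<in> E"
  using assms unfolding closed_walk_def by (metis in_set_conv_nth)

lemma closed_walk_snoc_idle:
  assumes "closed_walk (sched_edges I D T) ws"
  shows "closed_walk (sched_edges I D T) (ws @ [idle_block])"
proof -
  let ?E = "sched_edges I D T"
  have "ws \<noteq> []"
    using assms unfolding closed_walk_def by simp
  then obtain B C where "(last ws, B) \<in> ?E" "(hd ws, C) \<in> ?E"
    using assms closed_walk_edge_source by (metis last_in_set hd_in_set)
  then have "(last ws, idle_block) \<in> ?E" "(idle_block, hd ws) \<in> ?E"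
    "(idle_block, idle_block) \<in> ?E"
    using sched_edge_to_idle sched_edge_from_idle by metis+
  then show ?thesis
    using assms by (intro closed_walk_append) (simp_all add: closed_walk_def)
qed

definition periodic_schedule :: "('l \<Rightarrow> nat \<Rightarrow> bool) list \<Rightarrow> nat \<Rightarrow> 'l \<Rightarrow> int \<Rightarrow> bool" where
  "periodic_schedule ws T l t =
     (ws ! nat ((t div int T) mod int (length ws))) l (nat (t mod int T))"

lemma periodic_schedule_at:
  assumes "0 \<le> j" "j < int T"
  shows "periodic_schedule ws T l (m * int T + j) = (ws ! nat (m mod int (length ws))) l (nat j)"
proof -
  have "(m * int T + j) div int T = m" "(m * int T + j) mod int T = j"
    using assms by simp_all
  then show ?thesis
    unfolding periodic_schedule_def by simp
qed

lemma nat_mod_add_one: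
  assumes "k > 0"
  shows "nat ((m + 1) mod int k) = (nat (m mod int k) + 1) mod k"
proof -
  have "(m + 1) mod int k = (m mod int k + 1) mod int k"
    by (simp add: mod_add_left_eq)
  also have "\<dots> = int ((nat (m mod int k) + 1) mod k)"
    using assms by (simp add: zmod_int add.commute)
  finally show ?thesis
    by simp
qed

text \<open>Any window of \<open>2 T\<close> slots starting at a block boundary is covered by one edge of the
  scheduling graph, hence by a (shifted) collision-free schedule.\<close>

lemma periodic_schedule_window:
  assumes "closed_walk (sched_edges I D T) ws"
  shows "\<exists>S. collision_free I D S \<and>
    (\<forall>l s. m * int T \<le> s \<and> s < m * int T + 2 * int T \<longrightarrow> periodic_schedule ws T l s = S l s)"
proof -
  define k where "k = length ws"
  have k: "k > 0"
    using assms unfolding closed_walk_def k_def by simp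
  define i where "i = nat (m mod int k)"
  have "i < k"
    using k unfolding i_def by (simp add: nat_less_iff)
  then have "(ws ! i, ws ! ((i + 1) mod k)) \<in> sched_edges I D T"
    using assms unfolding closed_walk_def k_def by simp
  then obtain S0 where S0: "collision_free I D S0"
    "ws ! i = block S0 T 0" "ws ! ((i + 1) mod k) = block S0 T 1"
    unfolding sched_edges_def by auto
  have next_block: "nat ((m + 1) mod int k) = (i + 1) mod k"
    unfolding i_def using k by (rule nat_mod_add_one)
  show ?thesis
  proof (intro exI conjI allI impI)
    show "collision_free I D (\<lambda>l s. S0 l (s + - (m * int T)))"
      using S0(1) by (rule collision_free_shift)
    fix l s
    assume s: "m * int T \<le> s \<and> s < m * int T + 2 * int T"
    define j where "j = s - m * int T"
    consider "j < int T" | "int T \<le> j"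
      by linarith
    then show "periodic_schedule ws T l s = S0 l (s + - (m * int T))"
    proof cases
      case 1
      have "s = m * int T + j" "0 \<le> j"
        using s unfolding j_def by simp_all
      then show ?thesis
        using periodic_schedule_at[of j T ws l m] 1 S0(2)
        unfolding i_def k_def j_def block_def by (simp add: nat_less_iff)
    next
      case 2
      have "s = (m + 1) * int T + (j - int T)" "j - int T < int T"
        using s unfolding j_def by (simp_all add: algebra_simps)
      then show ?thesis
        using periodic_schedule_at[of "j - int T" T ws l "m + 1"] 2 S0(3) next_block
        unfolding k_def j_def block_def by (simp add: nat_less_iff algebra_simps)
    qed
  qed
qed

lemma collision_free_periodic_schedule:
  fixes I :: "'l::finite \<Rightarrow> 'l set set"
  assumes "closed_walk (sched_edges I D T) ws" "T > 0" "2 * character I D \<le> int T"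
  shows "collision_free I D (periodic_schedule ws T)"
proof (rule collision_free_if_locally)
  fix t
  define c where "c = character I D"
  have "0 \<le> c"
    unfolding c_def by (rule character_nonneg)
  define q r where "q = t div int T" and "r = t mod int T"
  have t: "t = q * int T + r" and r: "0 \<le> r" "r < int T"
    unfolding q_def r_def using assms(2) by simp_all
  obtain m where m: "m * int T \<le> t - c" "t + c < m * int T + 2 * int T"
  proof (cases "c \<le> r")
    case True
    show ?thesis
      by (rule that[of q]) (use True t r assms(3) in \<open>simp_all add: c_def\<close>)
  next
    case False
    have "(q - 1) * int T = q * int T - int T"
      by (simp add: algebra_simps)
    then show ?thesis
      using that[of "q - 1"] False t r assms(3) \<open>0 \<le> c\<close> unfolding c_def by linarith
  qed
  obtain S where S: "collision_free I D S"
    "\<And>l s. m * int T \<le> s \<Longrightarrow> s < m * int T + 2 * int T \<Longrightarrow> periodic_schedule ws T l s = S l s"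
    using periodic_schedule_window[OF assms(1), of m] by blast
  have "periodic_schedule ws T l s = S l s" if "\<bar>s - t\<bar> \<le> c" for l s
    using that m by (intro S(2)) auto
  then show "\<exists>S. collision_free I D S \<and>
      (\<forall>l s. \<bar>s - t\<bar> \<le> character I D \<longrightarrow> periodic_schedule ws T l s = S l s)"
    using S(1) unfolding c_def by blast
qed

lemma periodic_iterate:
  fixes f :: "nat \<Rightarrow> 'a"
  assumes "\<And>t. f (t + P) = f t"
  shows "f (t + m * P) = f t"
proof (induction m)
  case (Suc m)
  then show ?case
    using assms[of "t + m * P"] by (simp add: ac_simps)
qed simp

lemma sum_periodic:
  fixes f :: "nat \<Rightarrow> real"
  assumes "\<And>t. f (t + P) = f t"
  shows "(\<Sum>t<q * P + r. f t) = real q * (\<Sum>t<P. f t) + (\<Sum>t<r. f t)"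
proof -
  have shifted: "(\<Sum>t\<in>{m * P..<m * P + n}. f t) = (\<Sum>t<n. f t)" for m n
  proof -
    have "(\<Sum>t\<in>{m * P..<m * P + n}. f t) = (\<Sum>t\<in>{0..<n}. f (t + m * P))"
      using sum.shift_bounds_nat_ivl[of f 0 "m * P" n] by (simp add: add.commute)
    then show ?thesis
      using periodic_iterate[of f P, OF assms] by (simp add: atLeast0LessThan)
  qed
  have "(\<Sum>t<q * P. f t) = (\<Sum>m<q. \<Sum>t\<in>{m * P..<m * P + P}. f t)"
    by (rule sum.nat_group[symmetric])
  also have "\<dots> = real q * (\<Sum>t<P. f t)"
    by (simp add: shifted)
  finally have "(\<Sum>t<q * P. f t) = real q * (\<Sum>t<P. f t)" .
  moreover have "(\<Sum>t<q * P + r. f t) = (\<Sum>t<q * P. f t) + (\<Sum>t\<in>{q * P..<q * P + r}. f t)"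
    by (simp add: sum.atLeastLessThan_concat lessThan_atLeast0)
  ultimately show ?thesis
    by (simp add: shifted)
qed

text \<open>Writing \<open>N = q P + r\<close>, the deviation of the running average from the period average is
  \<open>(P s - c r) / (N P)\<close>, where \<open>s \<le> r < P\<close> and \<open>c \<le> P\<close> are sums of at most \<open>P\<close> values in
  \<open>[0, 1]\<close>; hence it is at most \<open>P / N\<close>.\<close>

lemma periodic_average_tendsto:
  fixes f :: "nat \<Rightarrow> real"
  assumes P: "P > 0" and per: "\<And>t. f (t + P) = f t" and f: "\<And>t. 0 \<le> f t" "\<And>t. f t \<le> 1"
  shows "(\<lambda>N. (1 / real N) * (\<Sum>t<N. f t)) \<longlonglongrightarrow> (\<Sum>t<P. f t) / real P"
proof -
  define c where "c = (\<Sum>t<P. f t)"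
  have c: "0 \<le> c" "c \<le> real P"
    using f sum_bounded_above[of "{..<P}" f 1] by (auto simp: c_def intro: sum_nonneg)
  have "norm ((1 / real N) * (\<Sum>t<N. f t) - c / real P) \<le> real P / real N" if "N > 0" for N
  proof -
    define q r where "q = N div P" and "r = N mod P"
    define s where "s = (\<Sum>t<r. f t)"
    have N: "N = q * P + r" and "r < P"
      unfolding q_def r_def using P by simp_all
    have s: "0 \<le> s" "s \<le> real r"
      using f sum_bounded_above[of "{..<r}" f 1] by (auto simp: s_def intro: sum_nonneg)
    have sum_N: "(\<Sum>t<N. f t) = real q * c + s"
      unfolding N c_def s_def by (rule sum_periodic[of f, OF per])
    have pos: "real N > 0" "real P > 0"
      using that P by simp_all
    have "(1 / real N) * (real q * c + s) - c / real P = (s * real P - c * real r) / (real N * real P)"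
      using pos N by (simp add: field_simps)
    moreover have "\<bar>s * real P - c * real r\<bar> \<le> real P * real P"
    proof -
      have "c * real r \<le> real P * real P" "s * real P \<le> real P * real P"
        using s c \<open>r < P\<close> by (intro mult_mono; simp)+
      moreover have "0 \<le> c * real r" "0 \<le> s * real P"
        using s c by simp_all
      ultimately show ?thesis
        by (simp add: abs_le_iff)
    qed
    ultimately show ?thesis
      using pos by (simp add: sum_N abs_divide divide_le_eq)
  qed
  then have "(\<lambda>N. (1 / real N) * (\<Sum>t<N. f t) - c / real P) \<longlonglongrightarrow> 0"
    by (intro Lim_null_comparison[OF _ lim_const_over_n[of "real P"]])
      (auto intro: eventually_mono[OF eventually_gt_at_top[of 0]])
  then show ?thesis
    unfolding c_def by (simp add: LIM_zero_iff)
qed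

lemma periodic_schedule_periodic:
  assumes "T > 0"
  shows "periodic_schedule ws T l (t + int (length ws * T)) = periodic_schedule ws T l t"
proof -
  have "(t + int (length ws * T)) div int T = t div int T + int (length ws)"
    "(t + int (length ws * T)) mod int T = t mod int T"
    using assms by simp_all
  then show ?thesis
    unfolding periodic_schedule_def by simp
qed

lemma has_rate_periodic_schedule:
  fixes I :: "'l::finite \<Rightarrow> 'l set set"
  assumes walk: "closed_walk (sched_edges I D T) ws" and "T > 0" "2 * character I D \<le> int T"
  shows "has_rate I D (periodic_schedule ws T) l (cycle_rate T ws $ l)"
proof -
  define k where "k = length ws"
  have "k > 0"
    using walk unfolding closed_walk_def k_def by simp
  define f :: "nat \<Rightarrow> real" where "f t = of_bool (periodic_schedule ws T l (int t))" for t
  have "collision_free I D (periodic_schedule ws T)"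
    using collision_free_periodic_schedule assms by blast
  then have summand: "of_bool (periodic_schedule ws T l (int t) \<and>
      \<not> has_collision I D (periodic_schedule ws T) l (int t)) = f t" for t
    unfolding collision_free_def f_def by auto
  have "f (t + k * T) = f t" for t
    using periodic_schedule_periodic[OF \<open>T > 0\<close>, of ws l "int t"] unfolding f_def k_def by simp
  then have "(\<lambda>N. (1 / real N) * (\<Sum>t<N. f t)) \<longlonglongrightarrow> (\<Sum>t<k * T. f t) / real (k * T)"
    using \<open>k > 0\<close> \<open>T > 0\<close> by (intro periodic_average_tendsto) (simp_all add: f_def)
  moreover have "(\<Sum>t<k * T. f t) = (\<Sum>m<k. \<Sum>j<T. of_bool ((ws ! m) l j))"
  proof -
    have "f (m * T + j) = of_bool ((ws ! m) l j)" if "m < k" "j < T" for m j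
      using periodic_schedule_at[of "int j" T ws l "int m"] that
      unfolding f_def k_def by (simp add: nat_mod_as_int[symmetric] mult.commute)
    then have "(\<Sum>t\<in>{m * T..<m * T + T}. f t) = (\<Sum>j<T. of_bool ((ws ! m) l j))" if "m < k" for m
      using that sum.shift_bounds_nat_ivl[of f 0 "m * T" T]
      by (simp add: add.commute atLeast0LessThan)
    then show ?thesis
      using sum.nat_group[of "\<lambda>t. f t" T k] by simp
  qed
  ultimately show ?thesis
    unfolding has_rate_def summand cycle_rate_def k_def by simp
qed

lemma scaled_cycle_rate:
  "real (length ws) *\<^sub>R cycle_rate T ws = (\<chi> l. (\<Sum>A\<leftarrow>ws. \<Sum>j<T. of_bool (A l j)) / real T)"
  by (simp add: vec_eq_iff cycle_rate_def sum_list_sum_nth atLeast0LessThan)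

lemma scaled_cycle_rate_append:
  "real (length (xs @ ys)) *\<^sub>R cycle_rate T (xs @ ys) =
     real (length xs) *\<^sub>R cycle_rate T xs + real (length ys) *\<^sub>R cycle_rate T ys"
  unfolding scaled_cycle_rate by (simp add: vec_eq_iff add_divide_distrib)

lemma scaled_cycle_rate_replicate:
  "real (length (concat (replicate p ws))) *\<^sub>R cycle_rate T (concat (replicate p ws)) =
     real p *\<^sub>R (real (length ws) *\<^sub>R cycle_rate T ws)"
proof (induction p)
  case (Suc p)
  then show ?case
    using scaled_cycle_rate_append[of ws "concat (replicate p ws)" T] by (simp add: algebra_simps)
qed (simp add: cycle_rate_def vec_eq_iff)

lemma cycle_rate_idle_block: "cycle_rate T [idle_block] = 0"
  by (simp add: cycle_rate_def idle_block_def vec_eq_iff)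

lemma closed_walk_append_idle:
  assumes "closed_walk (sched_edges I D T) xs" "closed_walk (sched_edges I D T) ys"
    and "last xs = idle_block" "last ys = idle_block"
  shows "closed_walk (sched_edges I D T) (xs @ ys)"
proof -
  have "xs \<noteq> []" "ys \<noteq> []"
    using assms unfolding closed_walk_def by simp_all
  then have "(idle_block, hd xs) \<in> sched_edges I D T" "(idle_block, hd ys) \<in> sched_edges I D T"
    using assms(1,2) closed_walk_edge_source sched_edge_from_idle by (metis hd_in_set)+
  then show ?thesis
    using assms by (intro closed_walk_append) simp_all
qed

definition closed_walk_rates ::
  "('l::finite \<Rightarrow> 'l set set) \<Rightarrow> ('l \<Rightarrow> 'l \<Rightarrow> int) \<Rightarrow> nat \<Rightarrow> (real ^ 'l) set" where
  "closed_walk_rates I D T = cycle_rate T ` {ws. closed_walk (sched_edges I D T) ws}"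

text \<open>Repeating \<open>w1\<close> \<open>length w2 * p\<close> times and \<open>w2\<close> \<open>length w1 * q\<close> times makes their
  weights proportional to \<open>p\<close> and \<open>q\<close>; the two idle blocks joining them add only \<open>2\<close> to the length.\<close>

lemma closed_walk_rates_combination:
  assumes "closed_walk (sched_edges I D T) w1" "closed_walk (sched_edges I D T) w2"
    and "p > 0" "q > 0"
  defines "c \<equiv> real (length w1) * real (length w2)"
  shows "\<exists>ws. closed_walk (sched_edges I D T) ws \<and>
    (c * real (p + q) + 2) *\<^sub>R cycle_rate T ws =
      c *\<^sub>R (real p *\<^sub>R cycle_rate T w1 + real q *\<^sub>R cycle_rate T w2)"
proof -
  define xs where "xs = concat (replicate (length w2 * p) w1) @ [idle_block]"
  define ys where "ys = concat (replicate (length w1 * q) w2) @ [idle_block]"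
  have "w1 \<noteq> []" "w2 \<noteq> []"
    using assms(1,2) unfolding closed_walk_def by simp_all
  then have "closed_walk (sched_edges I D T) (xs @ ys)"
    unfolding xs_def ys_def using assms(1-4)
    by (intro closed_walk_append_idle closed_walk_snoc_idle closed_walk_replicate) simp_all
  moreover have "real (length (xs @ ys)) = c * real (p + q) + 2"
    unfolding xs_def ys_def c_def by (simp add: length_concat sum_list_replicate algebra_simps)
  moreover have "real (length xs) *\<^sub>R cycle_rate T xs = (c * real p) *\<^sub>R cycle_rate T w1"
    using scaled_cycle_rate_append[of "concat (replicate (length w2 * p) w1)" "[idle_block]" T]
    unfolding xs_def scaled_cycle_rate_replicate cycle_rate_idle_block c_def by simp
  moreover have "real (length ys) *\<^sub>R cycle_rate T ys = (c * real q) *\<^sub>R cycle_rate T w2"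
    using scaled_cycle_rate_append[of "concat (replicate (length w1 * q) w2)" "[idle_block]" T]
    unfolding ys_def scaled_cycle_rate_replicate cycle_rate_idle_block c_def by simp
  ultimately have "closed_walk (sched_edges I D T) (xs @ ys) \<and>
    (c * real (p + q) + 2) *\<^sub>R cycle_rate T (xs @ ys) =
      c *\<^sub>R (real p *\<^sub>R cycle_rate T w1 + real q *\<^sub>R cycle_rate T w2)"
    using scaled_cycle_rate_append[of xs ys T] by (simp add: scaleR_add_right)
  then show ?thesis
    by blast
qed

lemma floor_fraction_tendsto:
  assumes "0 \<le> u"
  shows "(\<lambda>n. real (nat \<lfloor>real n * u\<rfloor> + 1) / real (n + 2)) \<longlonglongrightarrow> u"
proof (rule tendsto_sandwich)
  have "real n * u \<le> real (nat \<lfloor>real n * u\<rfloor> + 1)" "real (nat \<lfloor>real n * u\<rfloor> + 1) \<le> real n * u + 1"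
    for n
  proof -
    have "real (nat \<lfloor>real n * u\<rfloor> + 1) = of_int \<lfloor>real n * u\<rfloor> + 1"
      using assms by simp
    then show "real n * u \<le> real (nat \<lfloor>real n * u\<rfloor> + 1)" "real (nat \<lfloor>real n * u\<rfloor> + 1) \<le> real n * u + 1"
      using of_int_floor_le[of "real n * u"] real_of_int_floor_add_one_gt[of "real n * u"] by linarith+
  qed
  then show "\<forall>\<^sub>F n in sequentially. real n * u / real (n + 2) \<le> real (nat \<lfloor>real n * u\<rfloor> + 1) / real (n + 2)"
    "\<forall>\<^sub>F n in sequentially. real (nat \<lfloor>real n * u\<rfloor> + 1) / real (n + 2) \<le> (real n * u + 1) / real (n + 2)"
    by (auto intro!: always_eventually divide_right_mono)
  show "(\<lambda>n. real n * u / real (n + 2)) \<longlonglongrightarrow> u" "(\<lambda>n. (real n * u + 1) / real (n + 2)) \<longlonglongrightarrow> u"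
    by real_asymp+
qed

lemma segment_in_closure_closed_walk_rates:
  assumes "x \<in> closed_walk_rates I D T" "y \<in> closed_walk_rates I D T" "0 \<le> u" "u \<le> 1"
  shows "u *\<^sub>R x + (1 - u) *\<^sub>R y \<in> closure (closed_walk_rates I D T)"
proof -
  obtain w1 w2 where w: "closed_walk (sched_edges I D T) w1" "closed_walk (sched_edges I D T) w2"
    and xy: "x = cycle_rate T w1" "y = cycle_rate T w2"
    using assms(1,2) unfolding closed_walk_rates_def by blast
  define c where "c = real (length w1) * real (length w2)"
  have "c > 0"
    using w unfolding c_def closed_walk_def by simp
  define p where "p n = nat \<lfloor>real n * u\<rfloor> + 1" for n
  have p: "0 < p n" "p n < n + 2" for n
    using assms(4) floor_le_iff[of "real n * u" "int n"] mult_left_le[of u "real n"]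
    unfolding p_def by auto
  define t where "t n = real (p n) / real (n + 2)" for n
  have "\<exists>z. z \<in> closed_walk_rates I D T \<and> (c * real (n + 2) + 2) *\<^sub>R z =
      c *\<^sub>R (real (p n) *\<^sub>R x + real (n + 2 - p n) *\<^sub>R y)" for n
  proof -
    have "0 < n + 2 - p n" "p n + (n + 2 - p n) = n + 2"
      using p(2)[of n] by simp_all
    then show ?thesis
      using closed_walk_rates_combination[OF w p(1)[of n], of "n + 2 - p n"]
      unfolding closed_walk_rates_def xy c_def by auto
  qed
  then obtain z where z: "\<And>n. z n \<in> closed_walk_rates I D T"
    and z_eq: "\<And>n. (c * real (n + 2) + 2) *\<^sub>R z n = c *\<^sub>R (real (p n) *\<^sub>R x + real (n + 2 - p n) *\<^sub>R y)"
    using choice[of "\<lambda>n z. z \<in> closed_walk_rates I D T \<and> (c * real (n + 2) + 2) *\<^sub>R z =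
      c *\<^sub>R (real (p n) *\<^sub>R x + real (n + 2 - p n) *\<^sub>R y)"] by blast
  have z_form: "z n = (c * real (n + 2) / (c * real (n + 2) + 2)) *\<^sub>R (t n *\<^sub>R x + (1 - t n) *\<^sub>R y)"
    for n
  proof -
    have "real (n + 2 - p n) = real (n + 2) * (1 - t n)" "real (p n) = real (n + 2) * t n"
      using p(2)[of n] unfolding t_def by (simp_all add: of_nat_diff field_simps)
    then have eq: "(c * real (n + 2) + 2) *\<^sub>R z n =
        (c * real (n + 2)) *\<^sub>R (t n *\<^sub>R x + (1 - t n) *\<^sub>R y)"
      unfolding z_eq by (simp add: algebra_simps)
    have "c * real (n + 2) + 2 > 0"
      using \<open>c > 0\<close> by (intro add_pos_pos mult_pos_pos) simp_all
    then have "z n = inverse (c * real (n + 2) + 2) *\<^sub>R ((c * real (n + 2) + 2) *\<^sub>R z n)"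
      by simp
    then show ?thesis
      unfolding eq by (simp add: divide_inverse mult.commute)
  qed
  have "(\<lambda>n. c * real (n + 2) / (c * real (n + 2) + 2)) \<longlonglongrightarrow> 1"
    using \<open>c > 0\<close> by real_asymp
  moreover have "t \<longlonglongrightarrow> u"
    unfolding t_def p_def using assms(3) by (rule floor_fraction_tendsto)
  ultimately have "z \<longlonglongrightarrow> 1 *\<^sub>R (u *\<^sub>R x + (1 - u) *\<^sub>R y)"
    unfolding z_form by (intro tendsto_intros)
  then show ?thesis
    using z unfolding closure_sequential by auto
qed

lemma convex_closure_if_segments_in_closure:
  fixes S :: "'a::real_normed_vector set"
  assumes "\<And>x y u. x \<in> S \<Longrightarrow> y \<in> S \<Longrightarrow> 0 \<le> u \<Longrightarrow> u \<le> 1 \<Longrightarrow> u *\<^sub>R x + (1 - u) *\<^sub>R y \<in> closure S"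
  shows "convex (closure S)"
  unfolding convex_alt
proof (intro ballI allI impI)
  fix x y and u :: real
  assume "x \<in> closure S" "y \<in> closure S" and u: "0 \<le> u \<and> u \<le> 1"
  then obtain xs ys where "\<And>n. xs n \<in> S" "xs \<longlonglongrightarrow> x" "\<And>n. ys n \<in> S" "ys \<longlonglongrightarrow> y"
    unfolding closure_sequential by metis
  then have "(1 - u) *\<^sub>R xs n + u *\<^sub>R ys n \<in> closure S" for n
    using u assms[of "xs n" "ys n" "1 - u"] by simp
  moreover have "(\<lambda>n. (1 - u) *\<^sub>R xs n + u *\<^sub>R ys n) \<longlonglongrightarrow> (1 - u) *\<^sub>R x + u *\<^sub>R y"
    using \<open>xs \<longlonglongrightarrow> x\<close> \<open>ys \<longlonglongrightarrow> y\<close> by (intro tendsto_intros)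
  ultimately show "(1 - u) *\<^sub>R x + u *\<^sub>R y \<in> closure S"
    by (rule closed_sequentially[OF closed_closure])
qed

lemma closure_closed_walk_rates_subset_achievable:
  fixes I :: "'l::finite \<Rightarrow> 'l set set"
  assumes "T > 0" "2 * character I D \<le> int T"
  shows "closure (closed_walk_rates I D T) \<subseteq> achievable_region I D"
proof
  fix x assume x: "x \<in> closure (closed_walk_rates I D T)"
  have "closed_walk_rates I D T \<subseteq> {x. \<forall>l. 0 \<le> x $ l}"
    unfolding closed_walk_rates_def cycle_rate_def by (auto intro!: sum_nonneg divide_nonneg_nonneg)
  then have "\<forall>l. 0 \<le> x $ l"
    using closure_minimal[OF _ closed_positive_orthant] x by blast
  moreover have "\<exists>S RS. (\<forall>l. has_rate I D S l (RS l)) \<and> (\<forall>l. RS l \<ge> x $ l - \<epsilon>)" if "\<epsilon> > 0" for \<epsilon>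
  proof -
    obtain ws where ws: "closed_walk (sched_edges I D T) ws" and "dist (cycle_rate T ws) x < \<epsilon>"
      using x \<open>\<epsilon> > 0\<close> unfolding closure_approachable closed_walk_rates_def by blast
    then have "\<bar>cycle_rate T ws $ l - x $ l\<bar> < \<epsilon>" for l
      using component_le_norm_cart[of "cycle_rate T ws - x" l] by (simp add: dist_norm)
    then have "\<forall>l. cycle_rate T ws $ l \<ge> x $ l - \<epsilon>"
      by (simp add: abs_diff_less_iff less_imp_le)
    then show ?thesis
      using has_rate_periodic_schedule[OF ws assms] by blast
  qed
  ultimately show "x \<in> achievable_region I D"
    unfolding achievable_region_def by blast
qed

theorem theorem7:
  fixes I :: "'l::finite \<Rightarrow> 'l set set" and D :: "'l \<Rightarrow> 'l \<Rightarrow> int" and T :: nat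
  assumes "network I"
    and "int T \<ge> max (2 * character I D) 1"
  shows "graph_region I D T \<subseteq> achievable_region I D"
proof -
  have T: "T > 0" "2 * character I D \<le> int T"
    using assms(2) by simp_all
  have "{cycle_rate T cs | cs. is_cycle (sched_edges I D T) cs} \<subseteq> closed_walk_rates I D T"
    unfolding closed_walk_rates_def is_cycle_def closed_walk_def by auto
  also have "\<dots> \<subseteq> closure (closed_walk_rates I D T)"
    by (rule closure_subset)
  finally have "graph_region I D T \<subseteq> closure (closed_walk_rates I D T)"
    unfolding graph_region_def
    using convex_closure_if_segments_in_closure[OF segment_in_closure_closed_walk_rates]
    by (rule hull_minimal)
  also have "\<dots> \<subseteq> achievable_region I D"
    using T by (rule closure_closed_walk_rates_subset_achievable)
  finally show ?thesis .
qed

end
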